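(* Let $a,b\in(0,+\infty)$ satisfy $1<a-b$. Let $\varepsilon$ satisfy $$0<\varepsilon<\min\left\{1;\ \frac{a-1-b}{224\,b}\right\}.$$ Define $\varphi:\mathbb{R}\to\mathbb{R}$ by $$\varphi(t)=\begin{cases}\frac{3}{2}\pi & \text{if } t\in(-\infty,1],\\ \frac{3}{2}\pi+\varepsilon\ln\ln\big(e+(t-1)^4\big) & \text{if } t\in(1,+\infty),\end{cases}$$ and define $g$ on $[0,+\infty)$ by $g(t)=t^{a+b\sin(\varphi(t))}$. Then the following hold. (i) $g:[0,+\infty)\to[0,+\infty)$, $g(0)=0$, and $g(t)>0$ for $t>0$. (ii) $g\in C^1([0,+\infty))\cap C^2((0,+\infty))$. (iii) $\lim_{t\to0^+}\frac{g(t)}{t}=0$, $\lim_{t\to+\infty}\frac{g(t)}{t}=+\infty$, and $g'(0)=0$. (iv) For every $t>0$, $$0<\{-8b\varepsilon+a-b\}\frac{g(t)}{t}\le g'(t)\le\{8b\varepsilon+a+b\}\frac{g(t)}{t}.$$ (v) For every $t>0$, $$0<\{-8b\varepsilon+a-b\}\,t^{a-b-1}\le g'(t)\le\{8b\varepsilon+a+b\}\,[t^{a-b-1}+t^{a+b-1}].$$ (vi) For every $t>0$, $$0<\{-224b\varepsilon+a-1-b\}\frac{g'(t)}{t}\le g''(t)\le\{224b\varepsilon+a-1+b\}\frac{g'(t)}{t}.$$ (vii) $g$ is strictly convex on $[0,+\infty)$.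
   Context: Here $e$ is Euler's number and $\ln$ the natural logarithm. *)

theory Defs
  imports "HOL-Analysis.Analysis"
begin

definition phi :: "real \<Rightarrow> real \<Rightarrow> real" where
  "phi eps t = (if t \<le> 1 then 3/2 * pi
                else 3/2 * pi + eps * ln (ln (exp 1 + (t - 1) ^ 4)))"

text \<open>g(t) = t powered to (a + b sin(phi t)), meant on [0,+infinity); note 0 powr x = 0.\<close>
definition gfun :: "real \<Rightarrow> real \<Rightarrow> real \<Rightarrow> real \<Rightarrow> real" where
  "gfun a b eps t = t powr (a + b * sin (phi eps t))"

definition strict_convex_on :: "real set \<Rightarrow> (real \<Rightarrow> real) \<Rightarrow> bool" where
  "strict_convex_on S f \<longleftrightarrow> convex S \<and>
    (\<forall>x\<in>S. \<forall>y\<in>S. x \<noteq> y \<longrightarrow> (\<forall>u. 0 < u \<and> u < 1 \<longrightarrow>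
       f ((1 - u) * x + u * y) < (1 - u) * f x + u * f y))"

end

theory Submission
  imports Defs "HOL-Real_Asymp.Real_Asymp"
begin

text \<open>Write g t = t powr h t with h = a + b sin (phi eps t). Its elasticity E = t g' / g is
  h + t ln t h', and h' = b eps cos (phi eps t) phase' t, where phi = 3/2 pi + eps phase and
  t ln t phase' t stays in [0, 6] because phase t = ln ln (e + (t - 1)^4) grows so slowly. Hence E is
  within 6 b eps of h \<in> [a - b, a + b], which gives the first-derivative bounds. Differentiating
  g' = (g / t) E once more gives g'' = (g / t^2) (E (E - 1) + t E'), and the same mechanism bounds
  |t E'| by 174 b eps; since E \<ge> 1, the ratio g'' / (g' / t) = E - 1 + t E' / E lies within
  174 b eps of E - 1.
  Thus g'' > 0, so g' is strictly increasing and g strictly convex. On (0, 1] the phase is constant,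
  g t = t powr (a - b), which settles the behaviour at 0.\<close>

lemma DERIV_if_le:
  fixes f g :: "real \<Rightarrow> real"
  assumes "\<And>x. (f has_real_derivative f' x) (at x)" and "\<And>x. (g has_real_derivative g' x) (at x)"
    and "f c = g c" and "f' c = g' c"
  shows "((\<lambda>t. if t \<le> c then f t else g t) has_real_derivative (if x \<le> c then f' x else g' x)) (at x)"
proof -
  have "((\<lambda>t. if t \<in> {..c} then f t else g t) has_vector_derivative
      (if x \<in> {..c} then f' x else g' x)) (at x within UNIV)"
    by (rule has_vector_derivative_If_within_closures[where T = "{c<..}"])
      (use assms in \<open>auto simp: has_real_derivative_iff_has_vector_derivative[symmetric]
        intro: has_field_derivative_at_within\<close>)
  then show ?thesis by (simp add: has_real_derivative_iff_has_vector_derivative)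
qed

lemma DERIV_max0_power:
  assumes "2 \<le> k"
  shows "((\<lambda>t. max 0 t ^ k) has_real_derivative real k * max 0 x ^ (k - 1)) (at x)"
proof -
  have "((\<lambda>t. if t \<le> 0 then 0 else t ^ k) has_real_derivative
      (if x \<le> 0 then 0 else real k * x ^ (k - 1))) (at x)"
    by (rule DERIV_if_le) (use assms in \<open>auto intro!: derivative_eq_intros\<close>)
  moreover have "(\<lambda>t. max 0 t ^ k) = (\<lambda>t::real. if t \<le> 0 then 0 else t ^ k)"
    and "real k * max 0 x ^ (k - 1) = (if x \<le> 0 then 0 else real k * x ^ (k - 1))"
    using assms by (auto simp: max_def)
  ultimately show ?thesis by (simp only:)
qed

lemma DERIV_max0_power_shift:
  assumes "2 \<le> k"
  shows "((\<lambda>t. max 0 (t - c) ^ k) has_real_derivative real k * max 0 (x - c) ^ (k - 1)) (at x)"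
  using DERIV_chain2[OF DERIV_max0_power[OF assms] DERIV_diff[OF DERIV_ident DERIV_const]]
  by simp

lemma eventually_at_right_0_lt_1: "eventually (\<lambda>t. 0 < t \<and> t < 1) (at_right (0::real))"
  by (rule eventually_at_rightI[of 0 1]) simp_all

lemma abs_mult_cos_le:
  fixes c x y :: real
  assumes "0 \<le> c"
  shows "\<bar>c * cos x * y\<bar> \<le> c * \<bar>y\<bar>"
proof -
  have "\<bar>c * cos x * y\<bar> = \<bar>cos x\<bar> * (c * \<bar>y\<bar>)" using assms by (simp add: abs_mult)
  also have "\<dots> \<le> 1 * (c * \<bar>y\<bar>)" using assms by (intro mult_right_mono) simp_all
  finally show ?thesis by simp
qed

lemma quartic_estimates:
  fixes s :: real
  shows "1 + s \<le> 2 + s ^ 4" and "4 * s ^ 3 * (1 + s) \<le> 6 * (2 + s ^ 4)"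
    and "s\<^sup>2 * (1 + s)\<^sup>2 \<le> 4 * (2 + s ^ 4)"
proof -
  have "0 \<le> (s\<^sup>2 - 1/2)\<^sup>2 + (s - 1/2)\<^sup>2" by simp
  then show "1 + s \<le> 2 + s ^ 4" by (simp add: algebra_simps power2_eq_square eval_nat_numeral)
  have "0 \<le> (s\<^sup>2 - s - 1)\<^sup>2 + (s - 1)\<^sup>2 + 4" by simp
  then show "4 * s ^ 3 * (1 + s) \<le> 6 * (2 + s ^ 4)"
    by (simp add: algebra_simps power2_eq_square eval_nat_numeral)
  have "0 \<le> (s\<^sup>2 - s)\<^sup>2" "0 \<le> (s\<^sup>2 - 1/2)\<^sup>2" by simp_all
  then show "s\<^sup>2 * (1 + s)\<^sup>2 \<le> 4 * (2 + s ^ 4)"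
    by (simp add: algebra_simps power2_eq_square eval_nat_numeral)
qed

definition powr_elasticity :: "(real \<Rightarrow> real) \<Rightarrow> (real \<Rightarrow> real) \<Rightarrow> real \<Rightarrow> real" where
  "powr_elasticity h h' t = h t + t * ln t * h' t"

lemma DERIV_powr_exponent:
  assumes "0 < t" and "(h has_real_derivative h' t) (at t)"
  shows "((\<lambda>s. s powr h s) has_real_derivative t powr h t / t * powr_elasticity h h' t) (at t)"
  using DERIV_powr[OF DERIV_ident assms(1) assms(2)] assms(1)
  by (simp add: powr_elasticity_def field_simps)

lemma DERIV_powr_elasticity:
  assumes "0 < t" and "(h has_real_derivative h' t) (at t)" and "(h' has_real_derivative h'') (at t)"
  shows "(powr_elasticity h h' has_real_derivative (2 + ln t) * h' t + t * ln t * h'') (at t)"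
  unfolding powr_elasticity_def[abs_def]
  using assms by (auto intro!: derivative_eq_intros simp: field_simps)

lemma DERIV_div_mult_elasticity:
  assumes "0 < t" and "(G has_real_derivative G t / t * E t) (at t)" and "(E has_real_derivative E') (at t)"
  shows "((\<lambda>s. G s / s * E s) has_real_derivative G t / t\<^sup>2 * (E t * (E t - 1) + t * E')) (at t)"
  using assms by (auto intro!: derivative_eq_intros simp: field_simps power2_eq_square)

lemma mvt_convex_real:
  fixes f f' :: "real \<Rightarrow> real"
  assumes S: "convex S" and f': "\<And>x. x \<in> S \<Longrightarrow> (f has_real_derivative f' x) (at x within S)"
    and "x \<in> S" and "y \<in> S" and "x < y"
  shows "\<exists>w\<in>{x<..<y}. f y - f x = f' w * (y - x)"
proof (rule mvt_simple[OF \<open>x < y\<close>])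
  have ivl: "is_interval S" using S by (simp add: is_interval_convex_1)
  fix w assume "x \<le> w" "w \<le> y"
  then have "{x..y} \<subseteq> S" "w \<in> S"
    by (auto intro: mem_is_interval_1_I[OF ivl \<open>x \<in> S\<close> \<open>y \<in> S\<close>])
  then show "(f has_derivative (*) (f' w)) (at w within {x..y})"
    using f' has_field_derivative_subset unfolding has_field_derivative_def by blast
qed

lemma strict_convex_on_realI:
  fixes f f' :: "real \<Rightarrow> real"
  assumes S: "convex S"
    and f': "\<And>x. x \<in> S \<Longrightarrow> (f has_real_derivative f' x) (at x within S)"
    and mono: "\<And>x y. x \<in> S \<Longrightarrow> y \<in> S \<Longrightarrow> x < y \<Longrightarrow> f' x < f' y"
  shows "strict_convex_on S f"
proof -
  have ivl: "is_interval S" using S by (simp add: is_interval_convex_1)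
  have mvt: "\<exists>w\<in>{x<..<y}. f y - f x = f' w * (y - x)" if "x \<in> S" "y \<in> S" "x < y" for x y
    using that by (intro mvt_convex_real[OF S]) (auto intro: f')
  have chord: "f ((1 - u) * x + u * y) < (1 - u) * f x + u * f y"
    if xy: "x \<in> S" "y \<in> S" "x < y" and u: "0 < u" "u < 1" for x y u
  proof -
    define z where "z = (1 - u) * x + u * y"
    have zx: "z - x = u * (y - x)" and yz: "y - z = (1 - u) * (y - x)"
      by (simp_all add: z_def algebra_simps)
    have "0 < u * (y - x)" "0 < (1 - u) * (y - x)" using xy u by simp_all
    then have "x < z" and "z < y" unfolding atomize_conj using zx yz by linarith
    then have "z \<in> S" by (intro mem_is_interval_1_I[OF ivl \<open>x \<in> S\<close> \<open>y \<in> S\<close>]) simp_all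
    obtain w1 where w1: "w1 \<in> {x<..<z}" "f z - f x = f' w1 * (z - x)"
      using mvt[OF \<open>x \<in> S\<close> \<open>z \<in> S\<close> \<open>x < z\<close>] by blast
    obtain w2 where w2: "w2 \<in> {z<..<y}" "f y - f z = f' w2 * (y - z)"
      using mvt[OF \<open>z \<in> S\<close> \<open>y \<in> S\<close> \<open>z < y\<close>] by blast
    have "w1 \<in> S" "w2 \<in> S" using w1(1) w2(1)
      by (auto intro: mem_is_interval_1_I[OF ivl \<open>x \<in> S\<close> \<open>y \<in> S\<close>])
    moreover have "w1 < w2" using w1(1) w2(1) by simp
    ultimately have "f' w1 < f' w2" using mono by simp
    have "(1 - u) * f x + u * f y - f z = u * (f y - f z) - (1 - u) * (f z - f x)"
      by (simp add: algebra_simps)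
    also have "\<dots> = (1 - u) * u * (y - x) * (f' w2 - f' w1)"
      unfolding w1(2) w2(2) zx yz by (simp add: algebra_simps)
    also have "\<dots> > 0" using u xy \<open>f' w1 < f' w2\<close> by simp
    finally show ?thesis by (simp add: z_def)
  qed
  show ?thesis unfolding strict_convex_on_def
  proof (intro conjI S ballI impI allI)
    fix x y u :: real assume "x \<in> S" "y \<in> S" "x \<noteq> y" and u: "0 < u \<and> u < 1"
    show "f ((1 - u) * x + u * y) < (1 - u) * f x + u * f y"
    proof (cases "x < y")
      case True
      then show ?thesis using chord \<open>x \<in> S\<close> \<open>y \<in> S\<close> u by blast
    next
      case False
      then have "y < x" using \<open>x \<noteq> y\<close> by simp
      then have "f ((1 - (1 - u)) * y + (1 - u) * x) < (1 - (1 - u)) * f y + (1 - u) * f x"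
        using chord[of y x "1 - u"] \<open>x \<in> S\<close> \<open>y \<in> S\<close> u by simp
      then show ?thesis by (simp add: algebra_simps)
    qed
  qed
qed

section \<open>The phase function\<close>

text \<open>The case split in \<^const>\<open>phi\<close> is absorbed by the factor max 0 (t - 1) ^ 4, which vanishes on
  (-\<infinity>, 1] together with its first three derivatives.\<close>

definition phase_arg :: "real \<Rightarrow> real" where
  "phase_arg t = exp 1 + max 0 (t - 1) ^ 4"

definition phase :: "real \<Rightarrow> real" where
  "phase t = ln (ln (phase_arg t))"

definition phase' :: "real \<Rightarrow> real" where
  "phase' t = 4 * max 0 (t - 1) ^ 3 / (phase_arg t * ln (phase_arg t))"

definition phase'' :: "real \<Rightarrow> real" where
  "phase'' t = 12 * max 0 (t - 1) ^ 2 / (phase_arg t * ln (phase_arg t))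
     - phase' t ^ 2 * (ln (phase_arg t) + 1)"

lemma phi_eq_phase: "phi eps t = 3/2 * pi + eps * phase t"
  by (simp add: phi_def phase_def phase_arg_def max_def)

lemma exp_1_le_phase_arg: "exp 1 \<le> phase_arg t"
  by (simp add: phase_arg_def)

lemma phase_arg_pos: "0 < phase_arg t"
  using exp_1_le_phase_arg[of t] exp_gt_zero[of 1] by linarith

lemma one_le_ln_phase_arg: "1 \<le> ln (phase_arg t)"
  using exp_1_le_phase_arg[of t] by (subst ln_ge_iff) (auto intro: phase_arg_pos)

lemma DERIV_phase_arg: "(phase_arg has_real_derivative 4 * max 0 (t - 1) ^ 3) (at t)"
  unfolding phase_arg_def[abs_def]
  using DERIV_add[OF DERIV_const DERIV_max0_power_shift[of 4 1 t]] by simp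

lemma one_less_phase_arg: "1 < phase_arg t"
  using exp_1_le_phase_arg[of t] exp_gt_one[of 1] by linarith

lemma DERIV_phase: "(phase has_real_derivative phase' t) (at t)"
  unfolding phase_def[abs_def] phase'_def
  using one_less_phase_arg[of t] one_le_ln_phase_arg[of t]
  by (auto intro!: derivative_eq_intros DERIV_phase_arg simp: field_simps)

lemma DERIV_phase': "(phase' has_real_derivative phase'' t) (at t)"
proof -
  define u where "u = phase_arg t"
  define v where "v = ln u"
  have u: "u > 0" and v: "v \<ge> 1" using phase_arg_pos one_le_ln_phase_arg by (auto simp: u_def v_def)
  have numer: "((\<lambda>t. 4 * max 0 (t - 1) ^ 3) has_real_derivative 12 * max 0 (t - 1) ^ 2) (at t)"
    using DERIV_cmult[OF DERIV_max0_power_shift[of 3 1 t], of 4] by simp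
  have denom: "((\<lambda>t. phase_arg t * ln (phase_arg t)) has_real_derivative
      4 * max 0 (t - 1) ^ 3 * (v + 1)) (at t)"
    using u unfolding u_def v_def
    by (auto intro!: derivative_eq_intros DERIV_phase_arg simp: field_simps)
  have "(12 * max 0 (t - 1) ^ 2 * (u * v) - 4 * max 0 (t - 1) ^ 3 * (v + 1) * (4 * max 0 (t - 1) ^ 3))
      / (u * v) ^ Suc (Suc 0) = phase'' t"
    using u v unfolding phase''_def phase'_def u_def[symmetric]
    by (simp add: v_def[symmetric] field_simps power2_eq_square eval_nat_numeral)
  with DERIV_quotient[OF numer denom] u v one_less_phase_arg[of t] show ?thesis
    unfolding phase'_def[abs_def] u_def v_def by simp
qed

lemma isCont_phase'': "isCont phase'' t"
  unfolding phase''_def phase'_def phase_arg_def[abs_def]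
  using phase_arg_pos[of t] one_le_ln_phase_arg[of t]
  by (intro continuous_intros) (auto simp: phase_arg_def)

lemma phase'_eq_0: "t \<le> 1 \<Longrightarrow> phase' t = 0"
  and phase''_eq_0: "t \<le> 1 \<Longrightarrow> phase'' t = 0"
  by (simp_all add: phase''_def phase'_def)

lemma phase_arg_estimates:
  assumes "1 < t"
  shows "t \<le> phase_arg t" and "4 * (t - 1) ^ 3 * t \<le> 6 * phase_arg t"
    and "(t - 1)\<^sup>2 * t\<^sup>2 \<le> 4 * phase_arg t"
proof -
  have u: "2 + (t - 1) ^ 4 \<le> phase_arg t"
    using assms exp_ge_add_one_self[of 1] by (simp add: phase_arg_def)
  then show "t \<le> phase_arg t" using quartic_estimates(1)[of "t - 1"] by simp
  have "4 * (t - 1) ^ 3 * t = 4 * (t - 1) ^ 3 * (1 + (t - 1))" by simp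
  also have "\<dots> \<le> 6 * (2 + (t - 1) ^ 4)" by (rule quartic_estimates(2))
  also have "\<dots> \<le> 6 * phase_arg t" using u by simp
  finally show "4 * (t - 1) ^ 3 * t \<le> 6 * phase_arg t" .
  have "(t - 1)\<^sup>2 * t\<^sup>2 = (t - 1)\<^sup>2 * (1 + (t - 1))\<^sup>2" by simp
  also have "\<dots> \<le> 4 * (2 + (t - 1) ^ 4)" by (rule quartic_estimates(3))
  also have "\<dots> \<le> 4 * phase_arg t" using u by simp
  finally show "(t - 1)\<^sup>2 * t\<^sup>2 \<le> 4 * phase_arg t" .
qed

lemma phase'_bounds_gt_1:
  assumes "1 < t"
  shows "0 \<le> t * phase' t" and "t * phase' t * ln (phase_arg t) \<le> 6" and "t * phase' t \<le> 6"
    and "0 \<le> t * ln t * phase' t" and "t * ln t * phase' t \<le> 6"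
    and "t\<^sup>2 * ln t * phase' t ^ 2 \<le> 36"
proof -
  define u where "u = phase_arg t"
  define v where "v = ln u"
  have u: "0 < u" and v: "1 \<le> v" using phase_arg_pos one_le_ln_phase_arg by (simp_all add: u_def v_def)
  have ln_t: "0 \<le> ln t / v" "ln t / v \<le> 1"
    using assms phase_arg_estimates(1)[OF assms] v by (simp_all add: u_def v_def)
  have "t * phase' t * v = 4 * (t - 1) ^ 3 * t / u"
    using assms v by (simp add: phase'_def max_def u_def[symmetric] v_def[symmetric])
  also have "\<dots> \<le> 6" using phase_arg_estimates(2)[OF assms] u by (simp add: u_def divide_le_eq)
  finally have P: "t * phase' t * v \<le> 6" .
  have nonneg: "0 \<le> t * phase' t" using assms u v by (simp add: phase'_def u_def[symmetric] v_def[symmetric])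
  then have P0: "0 \<le> t * phase' t * v" using v by simp
  show "0 \<le> t * phase' t" by (rule nonneg)
  show "t * phase' t * ln (phase_arg t) \<le> 6" using P by (simp add: u_def v_def)
  show "t * phase' t \<le> 6" using mult_left_mono[OF v nonneg] P by simp
  have eq: "t * ln t * phase' t = (t * phase' t * v) * (ln t / v)" using v by simp
  show "0 \<le> t * ln t * phase' t" unfolding eq using P0 ln_t(1) by (rule mult_nonneg_nonneg)
  have "(t * phase' t * v) * (ln t / v) \<le> 6 * 1" using P P0 ln_t by (intro mult_mono) simp_all
  then show "t * ln t * phase' t \<le> 6" unfolding eq by simp
  have "(t * phase' t) * (t * ln t * phase' t) \<le> 6 * 6"
    using nonneg \<open>t * phase' t \<le> 6\<close> \<open>0 \<le> t * ln t * phase' t\<close> \<open>t * ln t * phase' t \<le> 6\<close>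
    by (intro mult_mono) simp_all
  then show "t\<^sup>2 * ln t * phase' t ^ 2 \<le> 36" by (simp add: power2_eq_square ac_simps)
qed

lemma phase''_bound_gt_1:
  assumes "1 < t"
  shows "t\<^sup>2 * ln t * \<bar>phase'' t\<bar> \<le> 120"
proof -
  define u where "u = phase_arg t"
  define v where "v = ln u"
  have u: "0 < u" and v: "1 \<le> v" using phase_arg_pos one_le_ln_phase_arg by (simp_all add: u_def v_def)
  have ln_t: "0 < ln t" "0 \<le> ln t / v" "ln t / v \<le> 1"
    using assms phase_arg_estimates(1)[OF assms] v by (simp_all add: u_def v_def)
  note phase' = phase'_bounds_gt_1[OF assms, folded u_def, folded v_def]
  have "0 \<le> t * phase' t * v" using phase'(1) v by simp
  have "phase'' t = 12 * (t - 1)\<^sup>2 / (u * v) - phase' t ^ 2 * (v + 1)"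
    using assms by (simp add: phase''_def max_def u_def[symmetric] v_def[symmetric])
  moreover have "0 \<le> 12 * (t - 1)\<^sup>2 / (u * v)" "0 \<le> phase' t ^ 2 * (v + 1)" using u v by simp_all
  ultimately have "\<bar>phase'' t\<bar> \<le> 12 * (t - 1)\<^sup>2 / (u * v) + phase' t ^ 2 * (v + 1)" by linarith
  then have "t\<^sup>2 * ln t * \<bar>phase'' t\<bar> \<le> t\<^sup>2 * ln t * (12 * (t - 1)\<^sup>2 / (u * v) + phase' t ^ 2 * (v + 1))"
    using ln_t by (intro mult_left_mono) simp_all
  also have "\<dots> = 12 * ((t - 1)\<^sup>2 * t\<^sup>2) / u * (ln t / v)
      + (t * ln t * phase' t) * (t * phase' t * v) + t\<^sup>2 * ln t * phase' t ^ 2"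
    using u v by (simp add: field_simps power2_eq_square)
  also have "\<dots> \<le> 48 * 1 + 6 * 6 + 36"
  proof (intro add_mono mult_mono)
    show "12 * ((t - 1)\<^sup>2 * t\<^sup>2) / u \<le> 48"
      using phase_arg_estimates(3)[OF assms] u by (simp add: u_def divide_le_eq ac_simps)
  qed (use ln_t phase' \<open>0 \<le> t * phase' t * v\<close> in simp_all)
  finally show ?thesis by simp
qed

section \<open>The function g and its derivatives\<close>

context
  fixes a b eps :: real
begin

definition expo :: "real \<Rightarrow> real" where
  "expo t = a + b * sin (phi eps t)"

definition expo' :: "real \<Rightarrow> real" where
  "expo' t = b * eps * cos (phi eps t) * phase' t"

definition expo'' :: "real \<Rightarrow> real" where
  "expo'' t = b * eps * (cos (phi eps t) * phase'' t - eps * sin (phi eps t) * phase' t ^ 2)"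

lemma DERIV_phi: "(phi eps has_real_derivative eps * phase' t) (at t)"
proof -
  have "phi eps = (\<lambda>t. 3/2 * pi + eps * phase t)" by (simp add: fun_eq_iff phi_eq_phase)
  then show ?thesis by (auto intro!: derivative_eq_intros DERIV_phase)
qed

lemma DERIV_expo: "(expo has_real_derivative expo' t) (at t)"
  unfolding expo_def[abs_def] expo'_def
  by (auto intro!: derivative_eq_intros DERIV_phi simp: algebra_simps)

lemma DERIV_expo': "(expo' has_real_derivative expo'' t) (at t)"
  unfolding expo'_def[abs_def] expo''_def
  by (auto intro!: derivative_eq_intros DERIV_phi DERIV_phase' simp: algebra_simps power2_eq_square)

lemma isCont_expo'': "isCont expo'' t"
  unfolding expo''_def[abs_def]
  by (intro continuous_intros isCont_phase'' DERIV_isCont[OF DERIV_phase'] DERIV_isCont[OF DERIV_phi])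

lemma expo_le_1: "t \<le> 1 \<Longrightarrow> expo t = a - b"
  using sin_3over2_pi by (simp add: expo_def phi_def)

lemma expo'_le_1: "t \<le> 1 \<Longrightarrow> expo' t = 0"
  by (simp add: expo'_def phase'_eq_0)

lemma expo_bounds:
  assumes "0 \<le> b"
  shows "a - b \<le> expo t" and "expo t \<le> a + b"
  using mult_left_mono[OF sin_ge_minus_one assms] mult_left_mono[OF sin_le_one assms]
  by (simp_all add: expo_def)

lemma expo'_bounds:
  assumes "0 \<le> b" and "0 \<le> eps" and "0 < t"
  shows "\<bar>t * expo' t\<bar> \<le> 6 * b * eps" and "\<bar>t * ln t * expo' t\<bar> \<le> 6 * b * eps"
proof -
  have "\<bar>t * expo' t\<bar> \<le> 6 * b * eps \<and> \<bar>t * ln t * expo' t\<bar> \<le> 6 * b * eps"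
  proof (cases "t \<le> 1")
    case True
    then show ?thesis using assms by (simp add: expo'_le_1)
  next
    case False
    then have phase: "0 \<le> t * phase' t" "t * phase' t \<le> 6"
      "0 \<le> t * ln t * phase' t" "t * ln t * phase' t \<le> 6"
      using phase'_bounds_gt_1[of t] by simp_all
    have "\<bar>t * expo' t\<bar> = \<bar>b * eps * cos (phi eps t) * (t * phase' t)\<bar>"
      by (simp add: expo'_def ac_simps)
    also have "\<dots> \<le> b * eps * \<bar>t * phase' t\<bar>" using assms by (intro abs_mult_cos_le) simp
    also have "\<dots> \<le> b * eps * 6" using phase assms by (intro mult_left_mono) simp_all
    moreover have "\<bar>t * ln t * expo' t\<bar> = \<bar>b * eps * cos (phi eps t) * (t * ln t * phase' t)\<bar>"
      by (simp add: expo'_def ac_simps)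
    moreover have "\<dots> \<le> b * eps * \<bar>t * ln t * phase' t\<bar>" using assms by (intro abs_mult_cos_le) simp
    moreover have "\<dots> \<le> b * eps * 6" using phase assms by (intro mult_left_mono) simp_all
    ultimately show ?thesis by simp
  qed
  then show "\<bar>t * expo' t\<bar> \<le> 6 * b * eps" and "\<bar>t * ln t * expo' t\<bar> \<le> 6 * b * eps" by simp_all
qed

lemma expo''_bound:
  assumes "0 \<le> b" and "0 \<le> eps" and "eps \<le> 1" and "0 < t"
  shows "\<bar>t\<^sup>2 * ln t * expo'' t\<bar> \<le> 156 * b * eps"
proof (cases "t \<le> 1")
  case True
  then show ?thesis using assms by (simp add: expo''_def phase'_eq_0 phase''_eq_0)
next
  case False
  then have phase'_sq: "t\<^sup>2 * ln t * phase' t ^ 2 \<le> 36"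
    and phase'': "t\<^sup>2 * ln t * \<bar>phase'' t\<bar> \<le> 120"
    using phase'_bounds_gt_1(6) phase''_bound_gt_1 by simp_all
  have ln_t: "0 < ln t" using False by simp
  have "t\<^sup>2 * ln t * expo'' t
      = b * eps * (cos (phi eps t) * (t\<^sup>2 * ln t * phase'' t)
                   - eps * sin (phi eps t) * (t\<^sup>2 * ln t * phase' t ^ 2))"
    by (simp add: expo''_def algebra_simps)
  then have "\<bar>t\<^sup>2 * ln t * expo'' t\<bar>
      = b * eps * \<bar>cos (phi eps t) * (t\<^sup>2 * ln t * phase'' t)
                   - eps * sin (phi eps t) * (t\<^sup>2 * ln t * phase' t ^ 2)\<bar>"
    using assms by (simp add: abs_mult)
  also have "\<dots> \<le> b * eps * (t\<^sup>2 * ln t * \<bar>phase'' t\<bar> + eps * (t\<^sup>2 * ln t * phase' t ^ 2))"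
  proof (intro mult_left_mono)
    have "\<bar>cos (phi eps t) * (t\<^sup>2 * ln t * phase'' t)\<bar> \<le> t\<^sup>2 * ln t * \<bar>phase'' t\<bar>"
      using abs_mult_cos_le[of 1 "phi eps t" "t\<^sup>2 * ln t * phase'' t"] ln_t by (simp add: abs_mult)
    moreover have "\<bar>eps * sin (phi eps t) * (t\<^sup>2 * ln t * phase' t ^ 2)\<bar>
        = \<bar>sin (phi eps t)\<bar> * (eps * (t\<^sup>2 * ln t * phase' t ^ 2))"
      using ln_t assms by (simp add: abs_mult)
    moreover have "\<dots> \<le> 1 * (eps * (t\<^sup>2 * ln t * phase' t ^ 2))"
      using ln_t assms by (intro mult_right_mono) simp_all
    ultimately show "\<bar>cos (phi eps t) * (t\<^sup>2 * ln t * phase'' t)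
        - eps * sin (phi eps t) * (t\<^sup>2 * ln t * phase' t ^ 2)\<bar>
      \<le> t\<^sup>2 * ln t * \<bar>phase'' t\<bar> + eps * (t\<^sup>2 * ln t * phase' t ^ 2)" by linarith
  qed (use assms in simp)
  also have "\<dots> \<le> b * eps * (120 + 1 * 36)"
    using assms phase'' phase'_sq ln_t by (intro mult_left_mono add_mono mult_mono) simp_all
  finally show ?thesis by simp
qed

lemma powr_elasticity_bounds:
  assumes "0 \<le> b" and "0 \<le> eps" and "0 < t"
  shows "a - b - 6 * b * eps \<le> powr_elasticity expo expo' t"
    and "powr_elasticity expo expo' t \<le> a + b + 6 * b * eps"
  using expo'_bounds(2)[OF assms] expo_bounds[OF assms(1), of t]
  by (auto simp: powr_elasticity_def abs_le_iff)

lemma powr_elasticity_deriv_bound: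
  assumes "0 \<le> b" and "0 \<le> eps" and "eps \<le> 1" and "0 < t"
  shows "\<bar>t * ((2 + ln t) * expo' t + t * ln t * expo'' t)\<bar> \<le> 174 * b * eps"
proof -
  have "t * ((2 + ln t) * expo' t + t * ln t * expo'' t)
      = 2 * (t * expo' t) + t * ln t * expo' t + t\<^sup>2 * ln t * expo'' t"
    by (simp add: algebra_simps power2_eq_square)
  then show ?thesis
    using expo'_bounds[OF assms(1,2,4)] expo''_bound[OF assms] by (simp add: abs_le_iff)
qed

definition gfun' :: "real \<Rightarrow> real" where
  "gfun' t = gfun a b eps t / t * powr_elasticity expo expo' t"

definition gfun'' :: "real \<Rightarrow> real" where
  "gfun'' t = gfun a b eps t / t\<^sup>2 *
     (powr_elasticity expo expo' t * (powr_elasticity expo expo' t - 1)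
      + t * ((2 + ln t) * expo' t + t * ln t * expo'' t))"

lemma gfun_eq_powr_expo: "gfun a b eps = (\<lambda>t. t powr expo t)"
  by (simp add: fun_eq_iff gfun_def expo_def)

lemma DERIV_gfun:
  assumes "0 < t"
  shows "(gfun a b eps has_real_derivative gfun' t) (at t)"
  using DERIV_powr_exponent[where h' = expo', OF assms DERIV_expo]
  by (simp add: gfun'_def gfun_eq_powr_expo)

lemma DERIV_gfun':
  assumes "0 < t"
  shows "(gfun' has_real_derivative gfun'' t) (at t)"
proof -
  have "(gfun a b eps has_real_derivative gfun a b eps t / t * powr_elasticity expo expo' t) (at t)"
    using DERIV_gfun[OF assms] by (simp add: gfun'_def)
  from DERIV_div_mult_elasticity[OF assms this
      DERIV_powr_elasticity[where h' = expo', OF assms DERIV_expo DERIV_expo']]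
  show ?thesis by (simp add: gfun'_def[abs_def] gfun''_def)
qed

lemma isCont_gfun'': "0 < t \<Longrightarrow> isCont gfun'' t"
  unfolding gfun''_def[abs_def]
  by (intro continuous_intros isCont_expo'' DERIV_isCont[OF DERIV_gfun] DERIV_isCont[OF DERIV_expo']
      DERIV_isCont[OF DERIV_powr_elasticity[where h' = expo', OF _ DERIV_expo DERIV_expo']]) auto

lemma gfun_div_eq: "0 < t \<Longrightarrow> gfun a b eps t / t = t powr (expo t - 1)"
  by (simp add: gfun_eq_powr_expo powr_diff)

lemma gfun_div_le_1: "0 < t \<Longrightarrow> t \<le> 1 \<Longrightarrow> gfun a b eps t / t = t powr (a - b - 1)"
  by (simp add: gfun_div_eq expo_le_1)

lemma gfun'_le_1: "0 < t \<Longrightarrow> t \<le> 1 \<Longrightarrow> gfun' t = (a - b) * (gfun a b eps t / t)"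
  by (simp add: gfun'_def powr_elasticity_def expo_le_1 expo'_le_1)

lemma gfun_div_bounds:
  assumes "0 \<le> b" and "0 < t"
  shows "t powr (a - b - 1) \<le> gfun a b eps t / t"
    and "gfun a b eps t / t \<le> t powr (a - b - 1) + t powr (a + b - 1)"
proof -
  have "t powr (a - b - 1) \<le> t powr (expo t - 1) \<and> t powr (expo t - 1) \<le> t powr (a - b - 1) + t powr (a + b - 1)"
  proof (cases "t \<le> 1")
    case True
    then show ?thesis using assms by (simp add: expo_le_1)
  next
    case False
    then have "t powr (a - b - 1) \<le> t powr (expo t - 1)" "t powr (expo t - 1) \<le> t powr (a + b - 1)"
      using expo_bounds[OF assms(1), of t] by (simp_all add: powr_mono)
    then show ?thesis by (smt (verit) powr_ge_zero)
  qed
  then show "t powr (a - b - 1) \<le> gfun a b eps t / t"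
    and "gfun a b eps t / t \<le> t powr (a - b - 1) + t powr (a + b - 1)"
    using gfun_div_eq[OF assms(2)] by simp_all
qed

lemma gfun_div_tendsto_0:
  assumes "1 < a - b"
  shows "((\<lambda>t. gfun a b eps t / t) \<longlongrightarrow> 0) (at_right 0)"
proof -
  have "((\<lambda>t. t powr (a - b - 1)) \<longlongrightarrow> 0) (at_right 0)"
    using assms eventually_at_right_0_lt_1
    by (intro tendsto_zero_powrI[OF tendsto_ident_at tendsto_const]) (auto elim: eventually_mono)
  moreover have "eventually (\<lambda>t. t powr (a - b - 1) = gfun a b eps t / t) (at_right 0)"
    using eventually_at_right_0_lt_1 by eventually_elim (simp add: gfun_div_le_1)
  ultimately show ?thesis by (simp add: tendsto_cong)
qed

lemma gfun_has_derivative_nonneg: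
  assumes "1 < a - b" and "0 \<le> t"
  shows "(gfun a b eps has_real_derivative gfun' t) (at t within {0..})"
proof (cases "t = 0")
  case True
  have "((\<lambda>s. (gfun a b eps s - gfun a b eps 0) / (s - 0)) \<longlongrightarrow> gfun' 0) (at 0 within {0..})"
    using gfun_div_tendsto_0[OF assms(1)]
    by (simp add: at_within_Ici_at_right gfun'_def gfun_def)
  then show ?thesis using True by (simp add: has_field_derivative_iff)
next
  case False
  then have "0 < t" using assms(2) by simp
  then show ?thesis by (rule has_field_derivative_at_within[OF DERIV_gfun])
qed

lemma continuous_on_gfun':
  assumes "1 < a - b"
  shows "continuous_on {0..} gfun'"
  unfolding continuous_on_eq_continuous_within
proof
  fix t :: real assume "t \<in> {0..}"
  show "continuous (at t within {0..}) gfun'"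
  proof (cases "t = 0")
    case True
    have "((\<lambda>t. (a - b) * (gfun a b eps t / t)) \<longlongrightarrow> (a - b) * 0) (at_right 0)"
      by (intro tendsto_mult tendsto_const gfun_div_tendsto_0 assms)
    moreover have "eventually (\<lambda>t. (a - b) * (gfun a b eps t / t) = gfun' t) (at_right 0)"
      using eventually_at_right_0_lt_1 by eventually_elim (simp add: gfun'_le_1)
    ultimately have "(gfun' \<longlongrightarrow> 0) (at_right 0)" by (simp add: tendsto_cong)
    then show ?thesis
      using True by (simp add: continuous_within at_within_Ici_at_right gfun'_def)
  next
    case False
    then show ?thesis using \<open>t \<in> {0..}\<close>
      by (simp add: DERIV_isCont[OF DERIV_gfun'] continuous_at_imp_continuous_at_within)
  qed
qed

lemma gfun'_bounds:
  assumes "0 \<le> b" and "0 \<le> eps" and "8 * b * eps < a - b" and "0 < t"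
  shows "0 < (- 8 * b * eps + a - b) * (gfun a b eps t / t) \<and>
    (- 8 * b * eps + a - b) * (gfun a b eps t / t) \<le> gfun' t \<and>
    gfun' t \<le> (8 * b * eps + a + b) * (gfun a b eps t / t)"
proof (intro conjI)
  define r where "r = gfun a b eps t / t"
  have r: "0 < r" using assms(4) by (simp add: r_def gfun_def)
  have "0 \<le> b * eps" using assms(1,2) by simp
  then have "- 8 * b * eps + a - b \<le> powr_elasticity expo expo' t"
    and "powr_elasticity expo expo' t \<le> 8 * b * eps + a + b"
    using powr_elasticity_bounds[OF assms(1,2,4)] unfolding mult.assoc by linarith+
  then have "(- 8 * b * eps + a - b) * r \<le> powr_elasticity expo expo' t * r"
    and "powr_elasticity expo expo' t * r \<le> (8 * b * eps + a + b) * r"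
    using r by (simp_all add: mult_right_mono)
  moreover have "gfun' t = powr_elasticity expo expo' t * r" by (simp add: gfun'_def r_def)
  ultimately show "(- 8 * b * eps + a - b) * (gfun a b eps t / t) \<le> gfun' t"
    and "gfun' t \<le> (8 * b * eps + a + b) * (gfun a b eps t / t)" by (simp_all add: r_def)
  show "0 < (- 8 * b * eps + a - b) * (gfun a b eps t / t)"
    using assms(3) r unfolding r_def by (intro mult_pos_pos) simp_all
qed

lemma gfun'_powr_bounds:
  assumes "0 \<le> b" and "0 \<le> eps" and "8 * b * eps < a - b" and "0 < t"
  shows "0 < (- 8 * b * eps + a - b) * t powr (a - b - 1) \<and>
    (- 8 * b * eps + a - b) * t powr (a - b - 1) \<le> gfun' t \<and>
    gfun' t \<le> (8 * b * eps + a + b) * (t powr (a - b - 1) + t powr (a + b - 1))"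
proof -
  have "0 \<le> 8 * b * eps" using assms(1,2) by simp
  then have c: "0 < - 8 * b * eps + a - b" "0 \<le> 8 * b * eps + a + b"
    using assms(1,3) by linarith+
  have "(- 8 * b * eps + a - b) * t powr (a - b - 1) \<le> (- 8 * b * eps + a - b) * (gfun a b eps t / t)"
    and "(8 * b * eps + a + b) * (gfun a b eps t / t)
      \<le> (8 * b * eps + a + b) * (t powr (a - b - 1) + t powr (a + b - 1))"
    using gfun_div_bounds[OF assms(1,4)] c by (intro mult_left_mono; linarith)+
  moreover have "0 < (- 8 * b * eps + a - b) * t powr (a - b - 1)"
    using c assms(4) by simp
  ultimately show ?thesis using gfun'_bounds[OF assms] by linarith
qed

lemma gfun''_bounds:
  assumes "0 \<le> b" and "0 \<le> eps" and "eps \<le> 1" and "224 * b * eps < a - 1 - b" and "0 < t"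
  shows "0 < (- 224 * b * eps + a - 1 - b) * (gfun' t / t) \<and>
    (- 224 * b * eps + a - 1 - b) * (gfun' t / t) \<le> gfun'' t \<and>
    gfun'' t \<le> (224 * b * eps + a - 1 + b) * (gfun' t / t)"
proof -
  define q E D k where "q = gfun a b eps t / t\<^sup>2" and "E = powr_elasticity expo expo' t"
    and "D = t * ((2 + ln t) * expo' t + t * ln t * expo'' t)" and "k = 174 * b * eps"
  have be: "0 \<le> b * eps" using assms(1,2) by simp
  have q: "0 < q" using assms(5) by (simp add: q_def gfun_def)
  have E: "a - b - 6 * b * eps \<le> E" "E \<le> a + b + 6 * b * eps"
    using powr_elasticity_bounds[OF assms(1,2,5)] by (simp_all add: E_def)
  have D: "\<bar>D\<bar> \<le> k"
    using powr_elasticity_deriv_bound[OF assms(1,2,3,5)] by (simp add: D_def k_def)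
  have g'': "gfun'' t = q * (E * (E - 1) + D)" and g': "gfun' t / t = q * E"
    using assms(5) by (simp_all add: gfun''_def gfun'_def q_def E_def D_def power2_eq_square)
  have E1: "1 \<le> E" and lo: "- 224 * b * eps + a - 1 - b \<le> E - 1 - k"
    and hi: "E - 1 + k \<le> 224 * b * eps + a - 1 + b" and c: "0 < - 224 * b * eps + a - 1 - b"
    using E assms(4) be unfolding k_def mult.assoc by linarith+
  have qE: "0 < q * E" using q E1 by simp
  have "0 \<le> q * (D + k * E)" and "0 \<le> q * (k * E - D)"
    using q D E1 mult_left_mono[OF E1, of k] by (simp_all add: abs_le_iff)
  moreover have "q * (E * (E - 1) + D) - (E - 1 - k) * (q * E) = q * (D + k * E)"
    and "(E - 1 + k) * (q * E) - q * (E * (E - 1) + D) = q * (k * E - D)"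
    by (simp_all add: algebra_simps)
  moreover have "(- 224 * b * eps + a - 1 - b) * (q * E) \<le> (E - 1 - k) * (q * E)"
    and "(E - 1 + k) * (q * E) \<le> (224 * b * eps + a - 1 + b) * (q * E)"
    using lo hi qE by (simp_all add: mult_right_mono)
  moreover have "0 < (- 224 * b * eps + a - 1 - b) * (q * E)" using c qE by simp
  ultimately show ?thesis unfolding g'' g' by linarith
qed

lemma gfun'_strict_mono:
  assumes "0 \<le> b" and "0 \<le> eps" and "eps \<le> 1" and "224 * b * eps < a - 1 - b"
    and "0 \<le> x" and "x < y"
  shows "gfun' x < gfun' y"
proof (rule DERIV_pos_imp_increasing_open[OF \<open>x < y\<close>])
  fix t assume "x < t" "t < y"
  then have "0 < t" using assms(5) by linarith
  have "0 < gfun'' t"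
    using gfun''_bounds[OF assms(1-4) \<open>0 < t\<close>] by linarith
  then show "\<exists>y. (gfun' has_real_derivative y) (at t) \<and> 0 < y"
    using DERIV_gfun'[OF \<open>0 < t\<close>] by blast
next
  have "0 \<le> 224 * b * eps" using assms(1,2) by simp
  then have "1 < a - b" using assms(4) by linarith
  then show "continuous_on {x..y} gfun'"
    by (rule continuous_on_subset[OF continuous_on_gfun']) (use assms(5) in auto)
qed

lemma strict_convex_on_gfun:
  assumes "0 \<le> b" and "0 \<le> eps" and "eps \<le> 1" and "224 * b * eps < a - 1 - b"
  shows "strict_convex_on {0..} (gfun a b eps)"
proof (rule strict_convex_on_realI)
  have "0 \<le> 224 * b * eps" using assms(1,2) by simp
  then have "1 < a - b" using assms(4) by linarith
  then show "(gfun a b eps has_real_derivative gfun' t) (at t within {0..})" if "t \<in> {0..}" for t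
    using gfun_has_derivative_nonneg that by simp
  show "gfun' x < gfun' y" if "x \<in> {0..}" "y \<in> {0..}" "x < y" for x y
    using gfun'_strict_mono[OF assms] that by simp
qed simp

lemma gfun_div_at_top:
  assumes "0 \<le> b" and "1 < a - b"
  shows "filterlim (\<lambda>t. gfun a b eps t / t) at_top at_top"
proof (rule filterlim_at_top_mono[OF real_powr_at_top])
  show "eventually (\<lambda>t. t powr (a - b - 1) \<le> gfun a b eps t / t) at_top"
    using eventually_gt_at_top[of 0] by eventually_elim (use gfun_div_bounds[OF assms(1)] in simp)
qed (use assms in simp)

end

theorem theorem2p1:
  fixes a b eps :: real
  assumes ha: "0 < a" and hb: "0 < b" and hab: "1 < a - b"
    and he0: "0 < eps" and he1: "eps < min 1 ((a - 1 - b) / (224 * b))"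
  defines "g \<equiv> gfun a b eps"
  shows
    "g ` {0..} \<subseteq> {0..} \<and> g 0 = 0 \<and> (\<forall>t>0. g t > 0) \<and>
     ((\<lambda>t. g t / t) \<longlongrightarrow> 0) (at_right 0) \<and>
     filterlim (\<lambda>t. g t / t) at_top at_top \<and>
     strict_convex_on {0..} g \<and>
     (\<exists>g1 g2 :: real \<Rightarrow> real.
        (\<forall>t\<ge>0. (g has_real_derivative g1 t) (at t within {0..})) \<and>
        continuous_on {0..} g1 \<and>
        (\<forall>t>0. (g1 has_real_derivative g2 t) (at t)) \<and>
        continuous_on {0<..} g2 \<and>
        g1 0 = 0 \<and>
        (\<forall>t>0. 0 < (- 8 * b * eps + a - b) * (g t / t) \<and>
               (- 8 * b * eps + a - b) * (g t / t) \<le> g1 t \<and>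
               g1 t \<le> (8 * b * eps + a + b) * (g t / t)) \<and>
        (\<forall>t>0. 0 < (- 8 * b * eps + a - b) * t powr (a - b - 1) \<and>
               (- 8 * b * eps + a - b) * t powr (a - b - 1) \<le> g1 t \<and>
               g1 t \<le> (8 * b * eps + a + b) * (t powr (a - b - 1) + t powr (a + b - 1))) \<and>
        (\<forall>t>0. 0 < (- 224 * b * eps + a - 1 - b) * (g1 t / t) \<and>
               (- 224 * b * eps + a - 1 - b) * (g1 t / t) \<le> g2 t \<and>
               g2 t \<le> (224 * b * eps + a - 1 + b) * (g1 t / t)))"
proof -
  have b: "0 \<le> b" and e: "0 \<le> eps" "eps \<le> 1" using hb he0 he1 by simp_all
  have e_small: "224 * b * eps < a - 1 - b"
    using he1 hb by (simp add: pos_less_divide_eq mult.commute)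
  then have e_8: "8 * b * eps < a - b"
    using mult_nonneg_nonneg[OF b e(1)] unfolding mult.assoc by linarith
  have "continuous_on {0<..} (gfun'' a b eps)"
    by (intro continuous_at_imp_continuous_on ballI isCont_gfun'') simp
  then show ?thesis
    unfolding g_def
    using gfun_div_tendsto_0[OF hab] gfun_div_at_top[OF b hab] strict_convex_on_gfun[OF b e e_small]
      gfun_has_derivative_nonneg[OF hab] continuous_on_gfun'[OF hab] DERIV_gfun'
      gfun'_bounds[OF b e(1) e_8] gfun'_powr_bounds[OF b e(1) e_8] gfun''_bounds[OF b e e_small]
    by (intro conjI exI[of _ "gfun' a b eps"] exI[of _ "gfun'' a b eps"]) (auto simp: gfun_def gfun'_def)
qed

end
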